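(* Fix a constant integer $k\ge2$ and a constant $\varepsilon_0\in(0,\frac1{200\cdot2^k})$. For any sufficiently large integer $m\ge m_0(k,\varepsilon_0)$, let $\ell=\lfloor\frac1k\log\frac m{100\varepsilon_0}\rfloor$, let $\mathcal X=\{\Phi_i:0\le i<2^m\}$ be the set of hard CNF formulas with parameters $k,\ell,m$ described in the context, and let $n=mk\ell$. Let $K$ be uniformly random in $\{0,\dots,2^m-1\}$ and let $X_1,\dots,X_T$ be i.i.d. samples from $\mu_{\Phi_K}$. Any algorithm that, given $X_1,\dots,X_T$, outputs a formula $\Phi_{\tilde K}\in\mathcal X$ satisfying $d_{\mathrm{TV}}(\mu_{\Phi_K},\mu_{\Phi_{\tilde K}})\le\varepsilon_0$ with probability at least $\frac13$ requires at least $$T=\frac1{25\cdot2^k}\Big(\frac{n}{100\varepsilon_0\log(\frac n{100\varepsilon_0})}\Big)^{\frac{k-2}k}$$ samples.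
   Context: $\log$ denotes $\log_2$. Gadgets: on variables $U=\{v_{i,j}:i\in[\ell],j\in[k]\}$, for each $i\in\{1,\dots,\ell-1\}$, $j\in[k]$, let $c_{ij}$ be the clause on $\{v_{i,r}:r\ne j\}\cup\{v_{i+1,j}\}$ forbidding the all-True assignment if $i$ is odd and the all-False assignment if $i$ is even; let $\mathcal C$ be the set of these clauses and $c$ the clause on $\{v_{1,j}:j\in[k]\}$ forbidding all-True. The unrestricted depth-$\ell$ gadget is $(U,\mathcal C)$, the restricted one is $(U,\mathcal C\cup\{c\})$. Hard formulas: let $V$ have $mk\ell$ variables partitioned into $U_1,\dots,U_m$ each of size $k\ell$. For $0\le i<2^m$, write $i$ in binary with $m$ bits $i_1,\dots,i_m$; $\Phi_i=(V,\mathcal C_i)$ places on each $U_j$ the unrestricted depth-$\ell$ gadget if $i_j=0$ and the restricted depth-$\ell$ gadget if $i_j=1$. $\mu_{\Phi}$ is the uniform distribution over satisfying assignments of $\Phi$ and $d_{\mathrm{TV}}$ is total variation distance. *)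

theory Defs
  imports "HOL-Probability.Probability"
begin

text \<open>Variables v_{i,j} of block U_b are encoded as triples (b, a, r) with
  block b < m, level a < l (a = i - 1) and column r < k (r = j - 1).\<close>

type_synonym var = "nat \<times> nat \<times> nat"
type_synonym assignment = "var \<Rightarrow> bool"

definition vars :: "nat \<Rightarrow> nat \<Rightarrow> nat \<Rightarrow> var set" where
  "vars k l m = {0..<m} \<times> {0..<l} \<times> {0..<k}"

definition assignments :: "nat \<Rightarrow> nat \<Rightarrow> nat \<Rightarrow> assignment set" where
  "assignments k l m = {\<sigma>. \<forall>x. x \<notin> vars k l m \<longrightarrow> \<sigma> x = False}"

text \<open>Clause c_{ij} of the gadget on block b (1-indexed level i = a + 1, column j = c + 1):
  variables {v_{i,r} : r \<noteq> j} \<union> {v_{i+1,j}}; forbids all-True if i is odd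
  (i.e. a even) and all-False if i is even (a odd).\<close>
definition gadget_clause_sat :: "nat \<Rightarrow> nat \<Rightarrow> nat \<Rightarrow> nat \<Rightarrow> assignment \<Rightarrow> bool" where
  "gadget_clause_sat k b a c \<sigma> =
     (let forb = even a in
      \<not> ((\<forall>r<k. r \<noteq> c \<longrightarrow> \<sigma> (b, a, r) = forb) \<and> \<sigma> (b, Suc a, c) = forb))"

definition unrestricted_sat :: "nat \<Rightarrow> nat \<Rightarrow> nat \<Rightarrow> assignment \<Rightarrow> bool" where
  "unrestricted_sat k l b \<sigma> = (\<forall>a c. a + 1 < l \<longrightarrow> c < k \<longrightarrow> gadget_clause_sat k b a c \<sigma>)"

definition restr_clause_sat :: "nat \<Rightarrow> nat \<Rightarrow> assignment \<Rightarrow> bool" where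
  "restr_clause_sat k b \<sigma> = (\<not> (\<forall>r<k. \<sigma> (b, 0, r) = True))"

text \<open>Binary digit i_j (j = b + 1, 1-indexed, i_1 the most significant of m bits).\<close>
definition bit_of :: "nat \<Rightarrow> nat \<Rightarrow> nat \<Rightarrow> bool" where
  "bit_of m i b = odd (i div 2 ^ (m - 1 - b))"

definition sat_set :: "nat \<Rightarrow> nat \<Rightarrow> nat \<Rightarrow> nat \<Rightarrow> assignment set" where
  "sat_set k l m i = {\<sigma> \<in> assignments k l m.
      \<forall>b<m. unrestricted_sat k l b \<sigma> \<and> (bit_of m i b \<longrightarrow> restr_clause_sat k b \<sigma>)}"

definition mu :: "nat \<Rightarrow> nat \<Rightarrow> nat \<Rightarrow> nat \<Rightarrow> assignment pmf" where
  "mu k l m i = pmf_of_set (sat_set k l m i)"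

definition dTV :: "'a pmf \<Rightarrow> 'a pmf \<Rightarrow> real" where
  "dTV p q = (SUP A. \<bar>measure_pmf.prob p A - measure_pmf.prob q A\<bar>)"

definition success_prob ::
  "nat \<Rightarrow> nat \<Rightarrow> nat \<Rightarrow> real \<Rightarrow> nat \<Rightarrow> (assignment list \<Rightarrow> nat pmf) \<Rightarrow> real" where
  "success_prob k l m eps0 T A =
     measure_pmf.prob
       (do { K \<leftarrow> pmf_of_set {0..<2^m};
             X \<leftarrow> replicate_pmf T (mu k l m K);
             K' \<leftarrow> A X;
             return_pmf (K, K') })
       {(K, K'). K' < 2^m \<and> dTV (mu k l m K) (mu k l m K') \<le> eps0}"

end

(*
  Every satisfying assignment of an unrestricted gadget either satisfies the extra clause c or is
  the alternating assignment (levels alternately all True and all False), which is forced as soon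
  as c fails. Hence, with p = 1/|sat(unrestricted gadget)|, roughly 2^(-kl), mu_{Phi_K} is the
  image of a product of independent per-block coins of bias p and uniform restricted block
  assignments: an unrestricted block shows the alternating assignment when its coin is up.
  A block of Phi_K can only reveal its bit i_j to a sample whose coin is up there, so with
  T < 2^(l(k-2))/100 samples, by Markov's inequality at most m/2 blocks are revealed except with
  probability 2Tp. The remaining bits are uniform and hidden from the learner, whereas a formula
  within total variation eps0 of Phi_K must agree with K on all but m/25 blocks, because each
  disagreement contributes an event of probability p >= 100 eps0/m. Few guesses are that close
  to a uniformly random completion, so the learner succeeds with probability below 1/3; the
  choice of l turns the resulting bound T >= 2^(l(k-2))/100 into the stated one.
*)
theory Submission
  imports Defs
begin

section \<open>General facts on finite distributions and counting\<close>

lemma pmf_of_set_insert_eq_mixture: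
  assumes "finite A" "A \<noteq> {}" "x \<notin> A"
  shows "pmf_of_set (insert x A) =
    bernoulli_pmf (1 / card (insert x A)) \<bind> (\<lambda>h. if h then return_pmf x else pmf_of_set A)"
proof (rule pmf_eqI)
  fix y
  have "card A > 0" "card (insert x A) = Suc (card A)"
    using assms by (auto simp: card_gt_0_iff)
  \<comment> \<open>the denominator (card A + 1)^2, in the normal form produced by field_simps\<close>
  moreover have "0 < 1 + (real (card A) * real (card A) + real (card A) * 2)"
    by (simp add: add_pos_nonneg)
  ultimately show "pmf (pmf_of_set (insert x A)) y =
      pmf (bernoulli_pmf (1 / card (insert x A)) \<bind> (\<lambda>h. if h then return_pmf x else pmf_of_set A)) y"
    using assms by (auto simp: pmf_bind indicator_def field_simps of_nat_Suc)
qed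

lemma measure_diff_le_dTV: "\<bar>measure_pmf.prob p A - measure_pmf.prob q A\<bar> \<le> dTV p q"
  unfolding dTV_def
proof (rule cSUP_upper)
  have "\<bar>measure_pmf.prob p B - measure_pmf.prob q B\<bar> \<le> 1" for B
    using measure_pmf.prob_le_1[of p B] measure_pmf.prob_le_1[of q B]
      measure_nonneg[of p B] measure_nonneg[of q B]
    unfolding abs_le_iff by (intro conjI) linarith+
  then show "bdd_above (range (\<lambda>B. \<bar>measure_pmf.prob p B - measure_pmf.prob q B\<bar>))"
    by (intro bdd_aboveI2)
qed simp

lemma dTV_commute: "dTV p q = dTV q p"
  unfolding dTV_def by (simp add: abs_minus_commute)

lemma measure_bind_pmf_eq_integral:
  "measure_pmf.prob (bind_pmf M f) X = (\<integral>x. measure_pmf.prob (f x) X \<partial>M)"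
proof -
  have "ennreal (measure_pmf.prob (bind_pmf M f) X) = emeasure (bind_pmf M f) X"
    by (simp add: measure_pmf.emeasure_eq_measure)
  also have "\<dots> = (\<integral>\<^sup>+x. emeasure (f x) X \<partial>M)"
    by simp
  also have "\<dots> = (\<integral>\<^sup>+x. ennreal (measure_pmf.prob (f x) X) \<partial>M)"
    by (simp add: measure_pmf.emeasure_eq_measure)
  also have "\<dots> = ennreal (\<integral>x. measure_pmf.prob (f x) X \<partial>M)"
    by (intro nn_integral_eq_integral measure_pmf.integrable_const_bound[where B = 1]) auto
  finally show ?thesis by (simp add: integral_nonneg)
qed

lemma measure_bind_pmf_of_set_Pair:
  assumes "finite I" "I \<noteq> {}"
  shows "measure_pmf.prob (pmf_of_set I \<bind> (\<lambda>x. F x \<bind> (\<lambda>y. return_pmf (x, y)))) G =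
    (\<Sum>x\<in>I. measure_pmf.prob (F x) {y. (x, y) \<in> G}) / card I"
proof -
  have "F x \<bind> (\<lambda>y. return_pmf (x, y)) = map_pmf (Pair x) (F x)" for x
    by (simp add: map_pmf_def)
  then show ?thesis
    using assms by (simp add: measure_bind_pmf_eq_integral integral_pmf_of_set vimage_def)
qed

lemma map_replicate_pmf: "map_pmf (map f) (replicate_pmf T M) = replicate_pmf T (map_pmf f M)"
proof (induction T)
  case (Suc T)
  then show ?case by (simp add: map_bind_pmf bind_map_pmf flip: Suc.IH)
qed simp

lemma measure_replicate_pmf_ex_le:
  "measure_pmf.prob (replicate_pmf T M) {xs. \<exists>x\<in>set xs. P x} \<le> T * measure_pmf.prob M {x. P x}"
proof (induction T)
  case (Suc T)
  let ?M = "pair_pmf M (replicate_pmf T M)"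
  have "replicate_pmf (Suc T) M = map_pmf (\<lambda>(x, xs). x # xs) ?M"
    by (simp add: pair_pmf_def map_pmf_def bind_assoc_pmf bind_return_pmf)
  then have "measure_pmf.prob (replicate_pmf (Suc T) M) {xs. \<exists>x\<in>set xs. P x} =
      measure_pmf.prob ?M ({z. P (fst z)} \<union> {z. \<exists>x\<in>set (snd z). P x})"
    by (auto intro!: arg_cong[where f = "measure_pmf.prob _"])
  also have "\<dots> \<le> measure_pmf.prob ?M {z. P (fst z)} + measure_pmf.prob ?M {z. \<exists>x\<in>set (snd z). P x}"
    by (rule measure_Un_le) auto
  also have "measure_pmf.prob ?M {z. P (fst z)} = measure_pmf.prob (map_pmf fst ?M) {x. P x}"
    by (simp add: vimage_def)
  also have "\<dots> = measure_pmf.prob M {x. P x}"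
    by (simp add: map_fst_pair_pmf)
  also have "measure_pmf.prob ?M {z. \<exists>x\<in>set (snd z). P x} =
      measure_pmf.prob (map_pmf snd ?M) {xs. \<exists>x\<in>set xs. P x}"
    by (simp add: vimage_def)
  also have "\<dots> = measure_pmf.prob (replicate_pmf T M) {xs. \<exists>x\<in>set xs. P x}"
    by (simp add: map_snd_pair_pmf)
  finally show ?case using Suc.IH by (simp add: algebra_simps)
qed simp

lemma integral_card_eq_sum_measure:
  fixes M :: "'a pmf"
  assumes "finite P"
  shows "(\<integral>x. real (card {i\<in>P. x \<in> E i}) \<partial>M) = (\<Sum>i\<in>P. measure_pmf.prob M (E i))"
proof -
  have "real (card {i\<in>P. x \<in> E i}) = (\<Sum>i\<in>P. indicator (E i) x)" for x
    using assms by (simp add: indicator_def sum.If_cases Int_def)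
  moreover have "integrable M (indicator (E i) :: _ \<Rightarrow> real)" for i
    by (rule measure_pmf.integrable_const_bound[where B = 1]) auto
  ultimately show ?thesis by simp
qed

lemma sum_measure_le_multiplicity:
  fixes M :: "'a pmf"
  assumes "finite P" "\<And>x. real (card {i\<in>P. x \<in> E i}) \<le> N"
  shows "(\<Sum>i\<in>P. measure_pmf.prob M (E i)) \<le> N"
proof -
  have "0 \<le> N" by (rule order_trans[OF of_nat_0_le_iff assms(2)])
  then have "(\<integral>x. real (card {i\<in>P. x \<in> E i}) \<partial>M) \<le> (\<integral>x. N \<partial>M)"
    using assms(2) by (intro integral_mono measure_pmf.integrable_const_bound[where B = N]) auto
  then show ?thesis by (simp add: integral_card_eq_sum_measure[OF assms(1)])
qed

lemma one_minus_power_le_inverse: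
  fixes p :: real
  assumes "0 \<le> p" "p \<le> 1"
  shows "(1 - p) ^ d \<le> 1 / (1 + p * d)"
proof -
  have "(1 - p) ^ d * (1 + p * d) \<le> (1 - p) ^ d * (1 + p) ^ d"
    using Bernoulli_inequality[of p d] assms by (intro mult_left_mono) (simp_all add: mult.commute)
  also have "\<dots> = (1 - p * p) ^ d" by (simp add: power_mult_distrib[symmetric] algebra_simps)
  also have "\<dots> \<le> 1" using assms by (intro power_le_one) (auto simp: mult_le_one)
  finally show ?thesis using assms by (simp add: field_simps add_pos_nonneg)
qed

lemma two_power_three_quarters_power_le:
  assumes "1 \<le> d" "12 * d \<le> c"
  shows "(2::real) ^ d * (3 / 4) ^ c \<le> 1 / 10"
proof -
  have "(2::real) ^ d * (3 / 4) ^ c \<le> 2 ^ d * (3 / 4) ^ (12 * d)"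
    using assms(2) by (intro mult_left_mono power_decreasing) auto
  also have "\<dots> = (2 * (3 / 4) ^ 12) ^ d" by (simp add: power_mult power_mult_distrib)
  also have "\<dots> \<le> (2 * (3 / 4) ^ 12) ^ 1"
    using assms(1) by (intro power_decreasing) (auto simp: power_numeral_reduce)
  also have "\<dots> \<le> 1 / 10" by (simp add: power_numeral_reduce)
  finally show ?thesis .
qed

lemma sum_Pow_power_card:
  fixes x :: "'a :: comm_semiring_1"
  assumes "finite C"
  shows "(\<Sum>Z\<in>Pow C. x ^ card Z) = (1 + x) ^ card C"
  using assms
proof (induction C rule: finite_induct)
  case (insert a C)
  have inj: "inj_on (insert a) (Pow C)"
    using insert.hyps by (intro inj_onI) (auto simp: insert_eq_iff)
  have card_insert: "card (insert a Z) = Suc (card Z)" if "Z \<in> Pow C" for Z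
  proof -
    have "finite Z" "a \<notin> Z" using that insert.hyps by (auto intro: finite_subset)
    then show ?thesis by simp
  qed
  have "(\<Sum>Z\<in>Pow (insert a C). x ^ card Z) =
      (\<Sum>Z\<in>Pow C. x ^ card Z) + (\<Sum>Z\<in>insert a ` Pow C. x ^ card Z)"
    unfolding Pow_insert using insert.hyps by (intro sum.union_disjoint) auto
  also have "(\<Sum>Z\<in>insert a ` Pow C. x ^ card Z) = x * (\<Sum>Z\<in>Pow C. x ^ card Z)"
    by (simp add: sum.reindex[OF inj] card_insert sum_distrib_left)
  finally show ?case using insert.hyps insert.IH by (simp add: algebra_simps)
qed simp

lemma sum_Pow_Un_disjoint:
  assumes "A \<inter> B = {}"
  shows "(\<Sum>Z\<in>Pow (A \<union> B). f Z) = (\<Sum>X\<in>Pow A. \<Sum>Y\<in>Pow B. f (X \<union> Y))"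
proof -
  have bij: "bij_betw (\<lambda>z. fst z \<union> snd z) (Pow A \<times> Pow B) (Pow (A \<union> B))"
    by (rule bij_betw_byWitness[where f' = "\<lambda>Z. (Z \<inter> A, Z \<inter> B)"]) (use assms in auto)
  have "(\<Sum>X\<in>Pow A. \<Sum>Y\<in>Pow B. f (X \<union> Y)) = (\<Sum>z\<in>Pow A \<times> Pow B. f (fst z \<union> snd z))"
    by (simp add: sum.cartesian_product split_def)
  also have "\<dots> = (\<Sum>Z\<in>Pow (A \<union> B). f Z)"
    by (rule sum.reindex_bij_betw[OF bij])
  finally show ?thesis ..
qed

lemma card_small_subsets_le:
  assumes "finite C"
  shows "real (card {Z\<in>Pow C. card Z \<le> d}) \<le> 2 ^ d * (3 / 2) ^ card C"
proof -
  have "real (card {Z\<in>Pow C. card Z \<le> d}) = (\<Sum>Z\<in>Pow C. if card Z \<le> d then 1 else 0)"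
    using assms by (simp add: sum.If_cases Int_def)
  also have "\<dots> \<le> (\<Sum>Z\<in>Pow C. 2 ^ d * (1 / 2) ^ card Z)"
  proof (intro sum_mono)
    fix Z
    show "(if card Z \<le> d then 1 else 0) \<le> 2 ^ d * (1 / 2 :: real) ^ card Z"
    proof (cases "card Z \<le> d")
      case True
      then have "(2::real) ^ card Z \<le> 2 ^ d" by (intro power_increasing) auto
      then show ?thesis using True by (simp add: power_one_over field_simps)
    qed simp
  qed
  also have "\<dots> = 2 ^ d * (3 / 2) ^ card C"
    using sum_Pow_power_card[OF assms, of "1 / 2 :: real"] by (simp add: sum_distrib_left[symmetric])
  finally show ?thesis .
qed

lemma card_near_subsets_le:
  assumes "finite C" "S \<inter> C = {}" "finite S" "finite Y"
  shows "real (card {Z\<in>Pow C. card (sym_diff (S \<union> Z) Y) \<le> d}) \<le> 2 ^ d * (3 / 2) ^ card C"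
proof -
  let ?near = "{Z\<in>Pow C. card (sym_diff (S \<union> Z) Y) \<le> d}"
  have inj: "inj_on (\<lambda>Z. sym_diff Z (Y \<inter> C)) ?near"
    by (rule inj_on_inverseI[of _ "\<lambda>Z. sym_diff Z (Y \<inter> C)"]) auto
  have "sym_diff Z (Y \<inter> C) \<in> {Z\<in>Pow C. card Z \<le> d}" if "Z \<in> ?near" for Z
  proof -
    have "sym_diff Z (Y \<inter> C) \<subseteq> sym_diff (S \<union> Z) Y" using that assms(2) by auto
    moreover have "finite (sym_diff (S \<union> Z) Y)" using that assms by (auto intro: finite_subset)
    ultimately have "card (sym_diff Z (Y \<inter> C)) \<le> card (sym_diff (S \<union> Z) Y)"
      by (intro card_mono)
    then have "card (sym_diff Z (Y \<inter> C)) \<le> d" using that by simp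
    moreover have "sym_diff Z (Y \<inter> C) \<subseteq> C" using that by auto
    ultimately show ?thesis by simp
  qed
  then have "card ?near \<le> card {Z\<in>Pow C. card Z \<le> d}"
    using assms(1) by (intro card_inj_on_le[OF inj]) auto
  then show ?thesis using card_small_subsets_le[OF assms(1), of d] by linarith
qed

lemma sum_measure_near_le:
  fixes Q :: "'a pmf" and guess :: "'a \<Rightarrow> nat set"
  assumes "finite C" "S \<inter> C = {}" "finite S" "\<And>y. finite (guess y)"
  shows "(\<Sum>Z\<in>Pow C. measure_pmf.prob Q {y. card (sym_diff (S \<union> Z) (guess y)) \<le> d})
    \<le> 2 ^ d * (3 / 2) ^ card C"
proof (rule sum_measure_le_multiplicity)
  fix x
  show "real (card {Z\<in>Pow C. x \<in> {y. card (sym_diff (S \<union> Z) (guess y)) \<le> d}})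
      \<le> 2 ^ d * (3 / 2) ^ card C"
    using card_near_subsets_le[OF assms(1-3) assms(4)[of x]] by simp
qed (use assms(1) in simp)

text \<open>A guess that sees only the part of a uniformly random subset of {0..<m} inside H is rarely
  within distance d of it: each of the 2^|H| visible parts admits few close completions.\<close>
lemma sum_measure_close_guess_le:
  fixes Q :: "nat set \<Rightarrow> 'a pmf" and guess :: "'a \<Rightarrow> nat set"
  assumes "H \<subseteq> {0..<m}" "\<And>y. finite (guess y)"
  shows "(\<Sum>S\<in>Pow {0..<m}. measure_pmf.prob (Q (S \<inter> H)) {y. card (sym_diff S (guess y)) \<le> d})
    \<le> 2 ^ m * (2 ^ d * (3 / 4) ^ (m - card H))"
proof -
  define C where "C = {0..<m} - H"
  have HC: "{0..<m} = H \<union> C" "H \<inter> C = {}" "finite H" "finite C"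
    using assms(1) by (auto simp: C_def intro: finite_subset)
  have visible: "(X \<union> Z) \<inter> H = X" if "X \<subseteq> H" "Z \<subseteq> C" for X Z
    using that HC(2) by blast
  have card_C: "card C = m - card H"
    using assms(1) by (simp add: C_def card_Diff_subset finite_subset)
  have "(\<Sum>S\<in>Pow {0..<m}. measure_pmf.prob (Q (S \<inter> H)) {y. card (sym_diff S (guess y)) \<le> d}) =
      (\<Sum>X\<in>Pow H. \<Sum>Z\<in>Pow C. measure_pmf.prob (Q X) {y. card (sym_diff (X \<union> Z) (guess y)) \<le> d})"
    unfolding HC(1) sum_Pow_Un_disjoint[OF HC(2)]
    by (intro sum.cong refl) (simp add: visible)
  also have "\<dots> \<le> (\<Sum>X\<in>Pow H. 2 ^ d * (3 / 2) ^ card C)"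
    using HC assms(2) by (intro sum_mono sum_measure_near_le) (auto intro: finite_subset)
  also have "\<dots> = 2 ^ card H * 2 ^ card C * (2 ^ d * (3 / 4) ^ card C)"
  proof -
    have "(3 / 2 :: real) ^ card C = 2 ^ card C * (3 / 4) ^ card C"
      by (simp flip: power_mult_distrib)
    then show ?thesis using HC(3) by (simp only: sum_constant card_Pow) (simp add: mult_ac)
  qed
  also have "(2::real) ^ card H * 2 ^ card C = 2 ^ m"
    using card_Un_disjoint[OF HC(3,4,2)] by (simp flip: HC(1) power_add)
  finally show ?thesis by (simp add: card_C)
qed

section \<open>A single gadget\<close>

text \<open>A block is the restriction \<lambda>x. \<sigma> (b, x) of an assignment to U_b, indexed by
  (level a, column r) as in vars; gadget_sat and top_clause_sat are unrestricted_sat and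
  restr_clause_sat read on one block.\<close>
type_synonym block = "nat \<times> nat \<Rightarrow> bool"

definition gadget_sat :: "nat \<Rightarrow> nat \<Rightarrow> block \<Rightarrow> bool" where
  "gadget_sat k l g = (\<forall>a c. a + 1 < l \<longrightarrow> c < k \<longrightarrow>
      \<not> ((\<forall>r<k. r \<noteq> c \<longrightarrow> g (a, r) = even a) \<and> g (Suc a, c) = even a))"

definition top_clause_sat :: "nat \<Rightarrow> block \<Rightarrow> bool" where
  "top_clause_sat k g = (\<not> (\<forall>r<k. g (0, r)))"

definition block_sats :: "nat \<Rightarrow> nat \<Rightarrow> bool \<Rightarrow> block set" where
  "block_sats k l restricted = {g. (\<forall>a r. g (a, r) \<longrightarrow> a < l \<and> r < k) \<and>
      gadget_sat k l g \<and> (restricted \<longrightarrow> top_clause_sat k g)}"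

definition alternating_block :: "nat \<Rightarrow> nat \<Rightarrow> block" where
  "alternating_block k l = (\<lambda>(a, r). a < l \<and> r < k \<and> even a)"

lemma finite_block_sats: "finite (block_sats k l restricted)"
  and card_block_sats_le: "card (block_sats k l restricted) \<le> 2 ^ (l * k)"
proof -
  have inj: "inj_on Collect (block_sats k l restricted)"
    by (rule inj_onI) (rule Collect_inj)
  have sub: "Collect ` block_sats k l restricted \<subseteq> Pow ({0..<l} \<times> {0..<k})"
    by (auto simp: block_sats_def)
  show "finite (block_sats k l restricted)"
    using finite_subset[OF sub] inj by (auto dest: finite_imageD)
  have "card (block_sats k l restricted) \<le> card (Pow ({0..<l} \<times> {0..<k}))"
    using card_inj_on_le[OF inj sub] by simp
  then show "card (block_sats k l restricted) \<le> 2 ^ (l * k)"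
    by (simp add: card_Pow card_cartesian_product)
qed

lemma alternating_block_in_block_sats: "alternating_block k l \<in> block_sats k l False"
  by (auto simp: block_sats_def alternating_block_def gadget_sat_def)

lemma alternating_block_notin_restricted:
  "l \<ge> 1 \<Longrightarrow> alternating_block k l \<notin> block_sats k l True"
  by (auto simp: block_sats_def alternating_block_def top_clause_sat_def)

lemma block_sats_restricted_subset: "block_sats k l True \<subseteq> block_sats k l False"
  by (auto simp: block_sats_def)

text \<open>Once the top clause fails, the clauses c_{ij} force the whole block level by level.\<close>
lemma gadget_sat_forces_alternating:
  assumes g: "g \<in> block_sats k l False" and top: "\<not> top_clause_sat k g"
  shows "g = alternating_block k l"
proof -
  have level: "\<forall>r<k. g (a, r) = even a" if "a < l" for a
    using that
  proof (induction a)
    case 0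
    then show ?case using top by (simp add: top_clause_sat_def)
  next
    case (Suc a)
    then have row: "\<forall>r<k. g (a, r) = even a" by simp
    have "gadget_sat k l g" using g by (simp add: block_sats_def)
    then show ?case
      using Suc.prems row unfolding gadget_sat_def by fastforce
  qed
  show ?thesis
  proof
    fix x :: "nat \<times> nat"
    obtain a r where x: "x = (a, r)" by fastforce
    show "g x = alternating_block k l x"
      using level[of a] g by (cases "a < l \<and> r < k") (auto simp: x block_sats_def alternating_block_def)
  qed
qed

lemma block_sats_unrestricted_eq:
  assumes "l \<ge> 1"
  shows "block_sats k l False = insert (alternating_block k l) (block_sats k l True)"
proof (intro equalityI subsetI)
  fix g assume "g \<in> block_sats k l False"
  then show "g \<in> insert (alternating_block k l) (block_sats k l True)"
    using gadget_sat_forces_alternating by (cases "top_clause_sat k g") (auto simp: block_sats_def)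
qed (auto simp: alternating_block_in_block_sats block_sats_restricted_subset[THEN subsetD])

text \<open>Setting columns 0 and 1 of level a to odd a satisfies every clause, since each clause
  contains one of them at level a; the other columns are free.\<close>
lemma card_block_sats_restricted_ge:
  assumes k: "k \<ge> 2"
  shows "2 ^ (l * (k - 2)) \<le> card (block_sats k l True)"
proof -
  let ?H = "{0..<l} \<times> {2..<k}"
  define extend :: "(nat \<times> nat) set \<Rightarrow> block"
    where "extend Z = (\<lambda>(a, r). a < l \<and> r < k \<and> (if r < 2 then odd a else (a, r) \<in> Z))" for Z
  have extend_on_H: "extend Z x = (x \<in> Z)" if "x \<in> ?H" for Z x
    using that by (auto simp: extend_def)
  have inj: "inj_on extend (Pow ?H)"
  proof (rule inj_onI)
    fix Z Y assume Z: "Z \<in> Pow ?H" and Y: "Y \<in> Pow ?H" and eq: "extend Z = extend Y"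
    show "Z = Y"
    proof (rule set_eqI)
      fix x
      show "x \<in> Z \<longleftrightarrow> x \<in> Y"
        using extend_on_H[of x Z] extend_on_H[of x Y] eq Z Y by auto
    qed
  qed
  have "extend Z \<in> block_sats k l True" for Z
  proof -
    have "gadget_sat k l (extend Z)"
      unfolding gadget_sat_def
    proof (intro allI impI notI)
      fix a c assume "a + 1 < l" "c < k"
        and clause: "(\<forall>r<k. r \<noteq> c \<longrightarrow> extend Z (a, r) = even a) \<and> extend Z (Suc a, c) = even a"
      obtain r :: nat where "r < 2" "r \<noteq> c"
        by (metis One_nat_def lessI n_not_Suc_n numeral_2_eq_2 pos2)
      then have "extend Z (a, r) = even a" using clause k by auto
      moreover have "extend Z (a, r) = odd a" using \<open>r < 2\<close> \<open>a + 1 < l\<close> k by (simp add: extend_def)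
      ultimately show False by simp
    qed
    moreover have "top_clause_sat k (extend Z)"
      using k by (auto simp: top_clause_sat_def extend_def intro!: exI[of _ 0])
    ultimately show ?thesis by (auto simp: block_sats_def extend_def)
  qed
  then have "extend ` Pow ?H \<subseteq> block_sats k l True" by blast
  then have "card (Pow ?H) \<le> card (block_sats k l True)"
    using card_inj_on_le[OF inj] finite_block_sats by blast
  then show ?thesis by (simp add: card_Pow card_cartesian_product)
qed

lemma block_sats_nonempty: "k \<ge> 2 \<Longrightarrow> block_sats k l restricted \<noteq> {}"
  using card_block_sats_restricted_ge[of k l] block_sats_restricted_subset[of k l]
  by (cases restricted) (auto simp: Suc_le_eq)

definition alternating_prob :: "nat \<Rightarrow> nat \<Rightarrow> real" where
  "alternating_prob k l = 1 / card (block_sats k l False)"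

lemma alternating_prob_nonneg: "0 \<le> alternating_prob k l"
  by (simp add: alternating_prob_def)

lemma alternating_prob_pos: "k \<ge> 2 \<Longrightarrow> 0 < alternating_prob k l"
  using block_sats_nonempty[of k l False] finite_block_sats[of k l False]
  by (simp add: alternating_prob_def card_gt_0_iff)

lemma alternating_prob_le_1: "alternating_prob k l \<le> 1"
  by (cases "card (block_sats k l False)") (simp_all add: alternating_prob_def)

lemma alternating_prob_ge:
  assumes "k \<ge> 2" "2 ^ (k * l) \<le> Q"
  shows "1 / Q \<le> alternating_prob k l"
proof -
  let ?c = "real (card (block_sats k l False))"
  have "0 < ?c"
    using block_sats_nonempty[OF assms(1)] finite_block_sats by (simp add: card_gt_0_iff)
  moreover have "?c \<le> Q"
    using card_block_sats_le[of k l False] assms(2)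
    by (metis mult.commute of_nat_le_iff of_nat_numeral of_nat_power order_trans)
  ultimately show ?thesis
    unfolding alternating_prob_def by (intro divide_left_mono) auto
qed

lemma alternating_prob_mult_le:
  assumes "k \<ge> 2"
  shows "alternating_prob k l * 2 ^ (l * (k - 2)) \<le> 1"
proof -
  have "2 ^ (l * (k - 2)) \<le> card (block_sats k l False)"
    using card_block_sats_restricted_ge[OF assms] card_mono[OF finite_block_sats block_sats_restricted_subset]
    by (rule order_trans)
  then have "(2::real) ^ (l * (k - 2)) \<le> card (block_sats k l False)"
    by (metis of_nat_le_iff of_nat_numeral of_nat_power)
  moreover have "0 < card (block_sats k l False)"
    using block_sats_nonempty[OF assms] finite_block_sats by (simp add: card_gt_0_iff)
  ultimately show ?thesis by (simp add: alternating_prob_def pos_divide_le_eq)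
qed

section \<open>The hard distributions as images of independent coins\<close>

text \<open>With bias alternating_prob k l the alternating assignment receives exactly its uniform
  weight in the unrestricted gadget, so one coin per block couples both gadgets.\<close>
definition block_coupling :: "nat \<Rightarrow> nat \<Rightarrow> (bool \<times> block) pmf" where
  "block_coupling k l = pair_pmf (bernoulli_pmf (alternating_prob k l)) (pmf_of_set (block_sats k l True))"

definition coupled_block :: "nat \<Rightarrow> nat \<Rightarrow> bool \<Rightarrow> bool \<times> block \<Rightarrow> block" where
  "coupled_block k l restricted x = (if fst x \<and> \<not> restricted then alternating_block k l else snd x)"

lemma map_coupled_block_block_coupling:
  assumes "k \<ge> 2" "l \<ge> 1"
  shows "map_pmf (coupled_block k l restricted) (block_coupling k l) =
    pmf_of_set (block_sats k l restricted)"
proof (cases restricted)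
  case True
  then have "coupled_block k l restricted = snd" by (simp add: fun_eq_iff coupled_block_def)
  then show ?thesis using True by (simp add: block_coupling_def map_snd_pair_pmf)
next
  case False
  let ?R = "pmf_of_set (block_sats k l True)"
  have "map_pmf (coupled_block k l restricted) (block_coupling k l) =
      bernoulli_pmf (alternating_prob k l) \<bind> (\<lambda>h. if h then return_pmf (alternating_block k l) else ?R)"
    unfolding block_coupling_def pair_pmf_def map_bind_pmf
    by (intro bind_pmf_cong refl)
       (simp add: False coupled_block_def map_pmf_def[symmetric] map_pmf_const)
  also have "\<dots> = pmf_of_set (block_sats k l restricted)"
    using assms False pmf_of_set_insert_eq_mixture[of "block_sats k l True" "alternating_block k l"]
      block_sats_nonempty finite_block_sats alternating_block_notin_restricted
    by (simp add: block_sats_unrestricted_eq alternating_prob_def)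
  finally show ?thesis .
qed

definition block_couplings :: "nat \<Rightarrow> nat \<Rightarrow> nat \<Rightarrow> (nat \<Rightarrow> bool \<times> block) pmf" where
  "block_couplings k l m = Pi_pmf {0..<m} (False, \<lambda>_. False) (\<lambda>_. block_coupling k l)"

definition restricted_blocks :: "nat \<Rightarrow> nat \<Rightarrow> nat set" where
  "restricted_blocks m K = {b. b < m \<and> bit_of m K b}"

lemma restricted_blocks_subset: "restricted_blocks m K \<subseteq> {0..<m}"
  by (auto simp: restricted_blocks_def)

lemma bij_betw_restricted_blocks: "bij_betw (restricted_blocks m) {0..<2 ^ m} (Pow {0..<m})"
proof -
  have inj: "inj_on (restricted_blocks m) {0..<2 ^ m}"
  proof (rule inj_onI)
    fix K K' assume K: "K \<in> {0..<2 ^ m}" and K': "K' \<in> {0..<2 ^ m}"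
      and eq: "restricted_blocks m K = restricted_blocks m K'"
    have "bit K j = bit K' j" if "j < m" for j
    proof -
      have "m - 1 - j \<in> restricted_blocks m K \<longleftrightarrow> m - 1 - j \<in> restricted_blocks m K'"
        using eq by simp
      moreover have "m - 1 - j < m" "m - 1 - (m - 1 - j) = j" using that by auto
      ultimately show ?thesis
        by (simp add: restricted_blocks_def bit_of_def bit_iff_odd)
    qed
    then have "take_bit m K = take_bit m K'"
      by (intro bit_eqI) (auto simp: bit_take_bit_iff)
    then show "K = K'" using K K' by (simp add: take_bit_nat_eq_self)
  qed
  moreover have "restricted_blocks m ` {0..<2 ^ m} = Pow {0..<m}"
  proof (rule card_subset_eq)
    show "restricted_blocks m ` {0..<2 ^ m} \<subseteq> Pow {0..<m}"
      using restricted_blocks_subset by blast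
    show "card (restricted_blocks m ` {0..<2 ^ m}) = card (Pow {0..<m})"
      using card_image[OF inj] by (simp add: card_Pow)
  qed simp
  ultimately show ?thesis by (simp add: bij_betw_def)
qed

definition assemble :: "nat \<Rightarrow> nat \<Rightarrow> nat \<Rightarrow> nat set \<Rightarrow> (nat \<Rightarrow> bool \<times> block) \<Rightarrow> assignment" where
  "assemble k l m S w = (\<lambda>(b, x). b < m \<and> coupled_block k l (b \<in> S) (w b) x)"

lemma sat_set_eq_image_PiE_dflt:
  "sat_set k l m K =
    case_prod ` PiE_dflt {0..<m} (\<lambda>_. False) (\<lambda>b. block_sats k l (b \<in> restricted_blocks m K))"
  (is "_ = case_prod ` ?P")
proof (intro equalityI subsetI)
  fix \<sigma> assume \<sigma>: "\<sigma> \<in> sat_set k l m K"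
  define f where "f b = (if b < m then (\<lambda>x. \<sigma> (b, x)) else (\<lambda>_. False))" for b
  have "f \<in> ?P"
    using \<sigma> by (auto simp: PiE_dflt_def f_def sat_set_def assignments_def vars_def block_sats_def
        unrestricted_sat_def gadget_clause_sat_def gadget_sat_def restr_clause_sat_def
        top_clause_sat_def restricted_blocks_def Let_def)
  moreover have "\<sigma> = case_prod f"
    using \<sigma> by (auto simp: fun_eq_iff f_def sat_set_def assignments_def vars_def)
  ultimately show "\<sigma> \<in> case_prod ` ?P" by blast
next
  fix \<sigma> assume "\<sigma> \<in> case_prod ` ?P"
  then obtain f where f: "f \<in> ?P" and "\<sigma> = case_prod f" by blast
  moreover have support: "b < m \<and> a < l \<and> r < k" if "f b (a, r)" for b a r
    using f that by (cases "b < m") (auto simp: PiE_dflt_def block_sats_def)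
  ultimately show "\<sigma> \<in> sat_set k l m K"
    by (auto dest: support simp: PiE_dflt_def sat_set_def assignments_def vars_def block_sats_def
        unrestricted_sat_def gadget_clause_sat_def gadget_sat_def restr_clause_sat_def
        top_clause_sat_def restricted_blocks_def)
qed

lemma finite_sat_set: "finite (sat_set k l m K)"
  unfolding sat_set_eq_image_PiE_dflt
  by (intro finite_imageI finite_PiE_dflt) (simp_all add: finite_block_sats)

lemma sat_set_nonempty: "k \<ge> 2 \<Longrightarrow> sat_set k l m K \<noteq> {}"
  using block_sats_nonempty by (simp add: sat_set_eq_image_PiE_dflt)

lemma mu_eq_map_block_couplings:
  assumes "k \<ge> 2" "l \<ge> 1"
  shows "mu k l m K = map_pmf (assemble k l m (restricted_blocks m K)) (block_couplings k l m)"
proof -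
  let ?S = "restricted_blocks m K"
  let ?P = "PiE_dflt {0..<m} (\<lambda>_. False) (\<lambda>b. block_sats k l (b \<in> ?S))"
  have inj: "inj (case_prod :: (nat \<Rightarrow> nat \<times> nat \<Rightarrow> bool) \<Rightarrow> _)"
    by (rule inj_on_inverseI[of _ curry]) simp
  have "mu k l m K = map_pmf case_prod (pmf_of_set ?P)"
    using block_sats_nonempty[OF assms(1)] finite_block_sats
    by (subst map_pmf_of_set_inj) (auto simp: mu_def sat_set_eq_image_PiE_dflt intro: inj_on_subset[OF inj])
  also have "pmf_of_set ?P = Pi_pmf {0..<m} (\<lambda>_. False) (\<lambda>b. pmf_of_set (block_sats k l (b \<in> ?S)))"
    using block_sats_nonempty[OF assms(1)] finite_block_sats by (simp add: Pi_pmf_of_set)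
  also have "\<dots> = Pi_pmf {0..<m} (\<lambda>_. False)
      (\<lambda>b. block_coupling k l \<bind> (\<lambda>x. return_pmf (coupled_block k l (b \<in> ?S) x)))"
    by (intro Pi_pmf_cong refl) (simp add: map_coupled_block_block_coupling[OF assms, symmetric] map_pmf_def)
  also have "\<dots> = block_couplings k l m \<bind>
      (\<lambda>w. Pi_pmf {0..<m} (\<lambda>_. False) (\<lambda>b. return_pmf (coupled_block k l (b \<in> ?S) (w b))))"
    unfolding block_couplings_def by (rule Pi_pmf_bind) simp
  also have "map_pmf case_prod \<dots> = map_pmf (assemble k l m ?S) (block_couplings k l m)"
    by (simp add: map_bind_pmf map_pmf_def[symmetric] pmf.map_comp)
       (intro map_pmf_cong refl, auto simp: assemble_def fun_eq_iff)
  finally show ?thesis .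
qed

lemma measure_block_couplings_coin:
  assumes "b < m"
  shows "measure_pmf.prob (block_couplings k l m) {w. fst (w b)} = alternating_prob k l"
proof -
  have "measure_pmf.prob (block_couplings k l m) {w. fst (w b)} =
      measure_pmf.prob (map_pmf fst (map_pmf (\<lambda>w. w b) (block_couplings k l m))) {True}"
    by (simp add: vimage_def)
  also have "map_pmf (\<lambda>w. w b) (block_couplings k l m) = block_coupling k l"
    unfolding block_couplings_def using assms by (subst Pi_pmf_component) auto
  also have "measure_pmf.prob (map_pmf fst (block_coupling k l)) {True} = alternating_prob k l"
    using alternating_prob_nonneg alternating_prob_le_1
    by (simp add: block_coupling_def map_fst_pair_pmf measure_pmf_single)
  finally show ?thesis .
qed

lemma measure_block_couplings_no_coin:
  assumes "D \<subseteq> {0..<m}"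
  shows "measure_pmf.prob (block_couplings k l m) {w. \<forall>b\<in>D. \<not> fst (w b)} =
    (1 - alternating_prob k l) ^ card D"
proof -
  have "measure_pmf.prob (block_coupling k l) {x. \<not> fst x} =
      measure_pmf.prob (map_pmf fst (block_coupling k l)) {False}"
    by (simp add: vimage_def)
  also have "\<dots> = 1 - alternating_prob k l"
    using alternating_prob_nonneg alternating_prob_le_1
    by (simp add: block_coupling_def map_fst_pair_pmf measure_pmf_single)
  finally have coin: "measure_pmf.prob (block_coupling k l) {x. \<not> fst x} = 1 - alternating_prob k l" .
  have "{w. \<forall>b\<in>D. \<not> fst (w b)} = Pi {0..<m} (\<lambda>b. if b \<in> D then {x. \<not> fst x} else UNIV)"
    using assms by (auto simp: Pi_def)
  then have "measure_pmf.prob (block_couplings k l m) {w. \<forall>b\<in>D. \<not> fst (w b)} =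
      measure_pmf.prob (block_couplings k l m) (Pi {0..<m} (\<lambda>b. if b \<in> D then {x. \<not> fst x} else UNIV))"
    by (rule arg_cong)
  also have "\<dots> = (\<Prod>b\<in>{0..<m}. measure_pmf.prob (block_coupling k l) (if b \<in> D then {x. \<not> fst x} else UNIV))"
    unfolding block_couplings_def by (rule measure_Pi_pmf_Pi) simp
  also have "\<dots> = (\<Prod>b\<in>{0..<m}. if b \<in> D then 1 - alternating_prob k l else 1)"
    by (intro prod.cong refl) (simp add: coin)
  also have "\<dots> = (1 - alternating_prob k l) ^ card D"
    using assms by (simp add: prod.If_cases Int_absorb2 Int_commute)
  finally show ?thesis .
qed

section \<open>Close hard distributions have close indices\<close>

text \<open>Witness event: some block restricted under K' but not under K shows the alternating
  assignment. It is impossible under K' and fails under K only if no such block has its coin up.\<close>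
lemma dTV_mu_ge:
  fixes m K K' :: nat
  assumes "k \<ge> 2" "l \<ge> 1"
  defines "D \<equiv> restricted_blocks m K' - restricted_blocks m K"
  shows "1 - (1 - alternating_prob k l) ^ card D \<le> dTV (mu k l m K) (mu k l m K')"
proof -
  define E where "E = {\<sigma> :: assignment. \<exists>b\<in>D. (\<lambda>x. \<sigma> (b, x)) = alternating_block k l}"
  have "sat_set k l m K' \<inter> E = {}"
  proof (intro equals0I)
    fix \<sigma> assume "\<sigma> \<in> sat_set k l m K' \<inter> E"
    then obtain b where restr: "restr_clause_sat k b \<sigma>" and block: "(\<lambda>x. \<sigma> (b, x)) = alternating_block k l"
      by (auto simp: E_def D_def sat_set_def restricted_blocks_def)
    from restr have "top_clause_sat k (\<lambda>x. \<sigma> (b, x))"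
      by (simp add: restr_clause_sat_def top_clause_sat_def)
    then have "top_clause_sat k (alternating_block k l)"
      by (simp only: block)
    then show False using assms(2) by (simp add: top_clause_sat_def alternating_block_def)
  qed
  then have never: "measure_pmf.prob (mu k l m K') E = 0"
    by (simp add: mu_def measure_pmf_of_set finite_sat_set sat_set_nonempty[OF assms(1)])
  have coins_down: "assemble k l m (restricted_blocks m K) -` (- E) \<subseteq> {w. \<forall>b\<in>D. \<not> fst (w b)}"
  proof (intro subsetI CollectI ballI notI)
    fix w b assume w: "w \<in> assemble k l m (restricted_blocks m K) -` (- E)" and "b \<in> D" "fst (w b)"
    then have "(\<lambda>x. assemble k l m (restricted_blocks m K) w (b, x)) = alternating_block k l"
      by (auto simp: D_def assemble_def coupled_block_def restricted_blocks_def)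
    then show False
      using w \<open>b \<in> D\<close> by (auto simp: E_def)
  qed
  have "measure_pmf.prob (mu k l m K) (- E) =
      measure_pmf.prob (block_couplings k l m) (assemble k l m (restricted_blocks m K) -` (- E))"
    by (simp add: mu_eq_map_block_couplings[OF assms(1,2)])
  also have "\<dots> \<le> measure_pmf.prob (block_couplings k l m) {w. \<forall>b\<in>D. \<not> fst (w b)}"
    by (rule measure_pmf.finite_measure_mono[OF coins_down]) simp
  also have "\<dots> = (1 - alternating_prob k l) ^ card D"
    using restricted_blocks_subset by (intro measure_block_couplings_no_coin) (auto simp: D_def)
  finally have "1 - (1 - alternating_prob k l) ^ card D \<le> measure_pmf.prob (mu k l m K) E"
    using measure_pmf.prob_compl[of E "mu k l m K"] by (simp add: Compl_eq_Diff_UNIV)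
  also have "\<dots> \<le> dTV (mu k l m K) (mu k l m K')"
    using measure_diff_le_dTV[of "mu k l m K" E "mu k l m K'"] never by simp
  finally show ?thesis .
qed

lemma card_sym_diff_restricted_blocks_lt:
  assumes "k \<ge> 2" "l \<ge> 1" "0 < eps0" "eps0 < 1 / 2" "m > 0"
    and p: "100 * eps0 / m \<le> alternating_prob k l"
    and close: "dTV (mu k l m K) (mu k l m K') \<le> eps0"
  shows "card (sym_diff (restricted_blocks m K) (restricted_blocks m K')) < m / 25"
proof -
  have one_sided: "card (restricted_blocks m K2 - restricted_blocks m K1) < m / 50"
    if "dTV (mu k l m K1) (mu k l m K2) \<le> eps0" for K1 K2
  proof (rule ccontr)
    let ?d = "card (restricted_blocks m K2 - restricted_blocks m K1)"
    let ?p = "alternating_prob k l"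
    assume "\<not> ?d < m / 50"
    then have "(100 * eps0 / m) * (m / 50) \<le> ?p * ?d"
      using p assms(3) alternating_prob_pos[OF assms(1), THEN less_imp_le] by (intro mult_mono) auto
    then have "2 * eps0 \<le> ?p * ?d" using assms(5) by (simp add: field_simps)
    then have "1 / (1 + ?p * ?d) \<le> 1 / (1 + 2 * eps0)"
      using assms(3) by (intro divide_left_mono) auto
    moreover have "(1 - ?p) ^ ?d \<le> 1 / (1 + ?p * ?d)"
      using alternating_prob_pos[OF assms(1)] alternating_prob_le_1
      by (intro one_minus_power_le_inverse) (simp_all add: less_imp_le)
    moreover have "eps0 < 1 - 1 / (1 + 2 * eps0)"
      using assms(3,4) by (simp add: field_simps)
    ultimately show False
      using dTV_mu_ge[OF assms(1,2), of m K2 K1] dTV_commute[of "mu k l m K1"] that by linarith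
  qed
  have "card (sym_diff (restricted_blocks m K) (restricted_blocks m K')) =
      card (restricted_blocks m K - restricted_blocks m K') + card (restricted_blocks m K' - restricted_blocks m K)"
    using finite_subset[OF restricted_blocks_subset] by (intro card_Un_disjoint) auto
  then show ?thesis
    using one_sided[OF close] one_sided[of K' K] close dTV_commute[of "mu k l m K"] by simp
qed

section \<open>Learning from few samples\<close>

definition revealed_blocks :: "nat \<Rightarrow> (nat \<Rightarrow> bool \<times> block) list \<Rightarrow> nat set" where
  "revealed_blocks m W = {b. b < m \<and> (\<exists>w\<in>set W. fst (w b))}"

lemma assemble_restrict_revealed:
  "w \<in> set W \<Longrightarrow> assemble k l m S w = assemble k l m (S \<inter> revealed_blocks m W) w"
  by (auto simp: assemble_def coupled_block_def revealed_blocks_def fun_eq_iff)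

lemma success_given_coins_le:
  assumes "k \<ge> 2" "l \<ge> 1" "0 < eps0" "eps0 < 1 / 2" "m \<ge> 25"
    and p: "100 * eps0 / m \<le> alternating_prob k l"
    and few: "2 * card (revealed_blocks m W) \<le> m"
  shows "measure_pmf.prob (pmf_of_set {0..<2 ^ m} \<bind>
      (\<lambda>K. A (map (assemble k l m (restricted_blocks m K)) W) \<bind> (\<lambda>K'. return_pmf (K, K'))))
      {(K, K'). K' < 2 ^ m \<and> dTV (mu k l m K) (mu k l m K') \<le> eps0} \<le> 1 / 10"
proof -
  define H where "H = revealed_blocks m W"
  define d where "d = m div 25"
  define Q where "Q S = A (map (assemble k l m S) W)" for S
  define g where "g S = measure_pmf.prob (Q (S \<inter> H))
      {K'. card (sym_diff S (restricted_blocks m K')) \<le> d}" for S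
  have H: "H \<subseteq> {0..<m}" by (auto simp: H_def revealed_blocks_def)
  have view: "Q S = Q (S \<inter> H)" for S
    unfolding Q_def H_def by (intro arg_cong[where f = A] map_cong refl assemble_restrict_revealed)
  have "real (card (sym_diff (restricted_blocks m K) (restricted_blocks m K'))) < m / 25 \<Longrightarrow>
      card (sym_diff (restricted_blocks m K) (restricted_blocks m K')) \<le> d" for K K'
    using div_mult_mod_eq[of m 25] mod_less_divisor[of 25 m] unfolding d_def by linarith
  then have close_blocks:
    "{K'. K' < 2 ^ m \<and> dTV (mu k l m K) (mu k l m K') \<le> eps0} \<subseteq>
      {K'. card (sym_diff (restricted_blocks m K) (restricted_blocks m K')) \<le> d}" for K
    using card_sym_diff_restricted_blocks_lt[OF assms(1-4) _ p] assms(5) by auto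
  have "(\<Sum>K\<in>{0..<2 ^ m}. g (restricted_blocks m K)) = (\<Sum>S\<in>Pow {0..<m}. g S)"
    by (rule sum.reindex_bij_betw[OF bij_betw_restricted_blocks])
  also have "\<dots> \<le> 2 ^ m * (2 ^ d * (3 / 4) ^ (m - card H))"
    unfolding g_def using H
    by (rule sum_measure_close_guess_le) (simp add: restricted_blocks_def)
  finally have sum_g_le: "(\<Sum>K\<in>{0..<2 ^ m}. g (restricted_blocks m K)) / 2 ^ m \<le>
      2 ^ d * (3 / 4) ^ (m - card H)"
    by (simp add: divide_le_eq mult.commute)
  have "measure_pmf.prob (pmf_of_set {0..<2 ^ m} \<bind>
      (\<lambda>K. Q (restricted_blocks m K) \<bind> (\<lambda>K'. return_pmf (K, K'))))
      {(K, K'). K' < 2 ^ m \<and> dTV (mu k l m K) (mu k l m K') \<le> eps0} =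
    (\<Sum>K\<in>{0..<2 ^ m}. measure_pmf.prob (Q (restricted_blocks m K))
      {K'. K' < 2 ^ m \<and> dTV (mu k l m K) (mu k l m K') \<le> eps0}) / 2 ^ m"
    by (simp add: measure_bind_pmf_of_set_Pair)
  also have "\<dots> \<le> (\<Sum>K\<in>{0..<2 ^ m}. g (restricted_blocks m K)) / 2 ^ m"
    unfolding g_def view[of "restricted_blocks m _"]
    by (intro divide_right_mono sum_mono measure_pmf.finite_measure_mono close_blocks) simp_all
  also have "\<dots> \<le> 2 ^ d * (3 / 4) ^ (m - card H)"
    by (rule sum_g_le)
  also have "\<dots> \<le> 1 / 10"
    using few assms(5) by (intro two_power_three_quarters_power_le) (auto simp: d_def H_def)
  finally show ?thesis by (simp add: Q_def)
qed

text \<open>Markov's inequality for the number of revealed blocks, whose expectation is at most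
  m T p by the union bound over the T samples.\<close>
lemma measure_many_revealed_le:
  assumes "m > 0"
  shows "measure_pmf.prob (replicate_pmf T (block_couplings k l m))
      {W. m < 2 * card (revealed_blocks m W)} \<le> 2 * real T * alternating_prob k l"
proof -
  let ?R = "replicate_pmf T (block_couplings k l m)"
  let ?revealed = "\<lambda>W. real (card (revealed_blocks m W))"
  have card_le: "card (revealed_blocks m W) \<le> m" for W
    by (rule order_trans[OF card_mono[of "{0..<m}"]]) (auto simp: revealed_blocks_def)
  have revealed_eq: "revealed_blocks m W = {b\<in>{0..<m}. W \<in> {W. \<exists>w\<in>set W. fst (w b)}}" for W
    by (auto simp: revealed_blocks_def)
  have "(\<integral>W. ?revealed W \<partial>?R) = (\<Sum>b\<in>{0..<m}. measure_pmf.prob ?R {W. \<exists>w\<in>set W. fst (w b)})"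
    unfolding revealed_eq by (rule integral_card_eq_sum_measure) simp
  also have "\<dots> \<le> (\<Sum>b\<in>{0..<m}. real T * alternating_prob k l)"
  proof (rule sum_mono)
    fix b assume "b \<in> {0..<m}"
    then show "measure_pmf.prob ?R {W. \<exists>w\<in>set W. fst (w b)} \<le> real T * alternating_prob k l"
      using measure_replicate_pmf_ex_le[of T "block_couplings k l m" "\<lambda>w. fst (w b)"]
        measure_block_couplings_coin[of b m k l] by simp
  qed
  finally have expectation: "(\<integral>W. ?revealed W \<partial>?R) \<le> real m * (real T * alternating_prob k l)"
    by simp
  have "measure_pmf.prob ?R {W. m < 2 * card (revealed_blocks m W)} \<le>
      measure_pmf.prob ?R {W \<in> space ?R. real m / 2 \<le> ?revealed W}"
    by (rule measure_pmf.finite_measure_mono) auto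
  also have "\<dots> \<le> (\<integral>W. ?revealed W \<partial>?R) / (real m / 2)"
  proof (rule integral_Markov_inequality_measure[where A = "{}"])
    show "integrable ?R ?revealed"
      using card_le by (intro measure_pmf.integrable_const_bound[where B = m]) auto
  qed (use assms in auto)
  also have "\<dots> \<le> real m * (real T * alternating_prob k l) / (real m / 2)"
    using expectation assms by (intro divide_right_mono) auto
  also have "\<dots> = 2 * real T * alternating_prob k l"
    using assms by simp
  finally show ?thesis .
qed

text \<open>Conditionally on the coins, the samples depend on K only through its revealed blocks.\<close>
lemma success_prob_le:
  assumes "k \<ge> 2" "l \<ge> 1" "0 < eps0" "eps0 < 1 / 2" "m \<ge> 25"
    and "100 * eps0 / m \<le> alternating_prob k l"
  shows "success_prob k l m eps0 T A \<le> 1 / 10 + 2 * real T * alternating_prob k l"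
proof -
  let ?R = "replicate_pmf T (block_couplings k l m)"
  define G where "G = {(K, K'). K' < 2 ^ m \<and> dTV (mu k l m K) (mu k l m K') \<le> eps0}"
  define success_given where "success_given W = measure_pmf.prob (pmf_of_set {0..<2 ^ m} \<bind>
      (\<lambda>K. A (map (assemble k l m (restricted_blocks m K)) W) \<bind> (\<lambda>K'. return_pmf (K, K')))) G"
    for W
  define many where "many = {W. m < 2 * card (revealed_blocks m W)}"
  have integrable: "integrable ?R (indicator many :: _ \<Rightarrow> real)"
    by (rule measure_pmf.integrable_const_bound[where B = 1]) auto
  have "success_prob k l m eps0 T A = measure_pmf.prob (?R \<bind> (\<lambda>W. pmf_of_set {0..<2 ^ m} \<bind>
      (\<lambda>K. A (map (assemble k l m (restricted_blocks m K)) W) \<bind> (\<lambda>K'. return_pmf (K, K'))))) G"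
    unfolding success_prob_def G_def mu_eq_map_block_couplings[OF assms(1,2)]
      map_replicate_pmf[symmetric] bind_map_pmf
    by (subst bind_commute_pmf) (rule refl)
  also have "\<dots> = (\<integral>W. success_given W \<partial>?R)"
    by (simp add: measure_bind_pmf_eq_integral success_given_def)
  also have "\<dots> \<le> (\<integral>W. 1 / 10 + indicator many W \<partial>?R)"
  proof (rule integral_mono)
    fix W
    show "success_given W \<le> 1 / 10 + indicator many W"
    proof (cases "W \<in> many")
      case True
      have "success_given W \<le> 1" unfolding success_given_def by (rule measure_pmf.prob_le_1)
      then show ?thesis using True by simp
    next
      case False
      then show ?thesis using success_given_coins_le[OF assms, of W A] by (simp add: success_given_def G_def many_def)
    qed
  next
    show "integrable ?R success_given"
      by (auto intro!: measure_pmf.integrable_const_bound[where B = 1] simp: success_given_def)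
    show "integrable ?R (\<lambda>W. 1 / 10 + indicator many W :: real)"
      using integrable by simp
  qed
  also have "\<dots> = 1 / 10 + measure_pmf.prob ?R many"
    using integrable by simp
  also have "\<dots> \<le> 1 / 10 + 2 * real T * alternating_prob k l"
    using measure_many_revealed_le[of m T k l] assms(5) by (simp add: many_def)
  finally show ?thesis .
qed

lemma success_prob_lt_one_third:
  assumes "k \<ge> 2" "l \<ge> 1" "0 < eps0" "eps0 < 1 / 2" "m \<ge> 25"
    and "2 ^ (k * l) \<le> real m / (100 * eps0)"
    and "real T < 2 ^ (l * (k - 2)) / 100"
  shows "success_prob k l m eps0 T A < 1 / 3"
proof -
  have p: "100 * eps0 / m \<le> alternating_prob k l"
    using alternating_prob_ge[OF assms(1,6)] by simp
  have "2 * real T * alternating_prob k l \<le> 2 * (2 ^ (l * (k - 2)) / 100) * alternating_prob k l"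
    using assms(7) alternating_prob_nonneg by (intro mult_right_mono) auto
  also have "\<dots> \<le> 1 / 50"
    using alternating_prob_mult_le[OF assms(1), of l] by (simp add: mult.commute)
  finally show ?thesis
    using success_prob_le[OF assms(1-5) p, of T A] by linarith
qed

section \<open>The choice of the parameters\<close>

lemma floor_log_level_bounds:
  fixes k m :: nat and eps0 :: real
  assumes "k \<ge> 2" "0 < eps0" "eps0 < 1" "100 * 2 ^ k \<le> real m"
  defines "l \<equiv> nat \<lfloor>(1 / real k) * log 2 (real m / (100 * eps0))\<rfloor>"
  shows "l \<ge> 1" "2 ^ (k * l) \<le> real m / (100 * eps0)" "real m / (100 * eps0) < 2 ^ (k * (l + 1))"
proof -
  define L where "L = log 2 (real m / (100 * eps0))"
  have "(0::real) < 100 * 2 ^ k" by simp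
  then have "0 < real m" using assms(4) by linarith
  then have "real m / 100 < real m / (100 * eps0)"
    using assms(2,3) by (simp add: field_simps)
  then have "2 ^ k < real m / (100 * eps0)" using assms(4) by simp
  moreover have Q: "real m / (100 * eps0) = 2 powr L"
    using \<open>0 < real m\<close> assms(2) by (simp add: L_def)
  ultimately have "2 powr real k < 2 powr L" by (simp add: powr_realpow)
  then have "real k < L" by simp
  have floor: "real l \<le> L / k" "L / k < real l + 1" "1 < L / k"
    using \<open>real k < L\<close> assms(1) by (auto simp: l_def L_def)
  have "0 < real l" using floor(2,3) by linarith
  then show "l \<ge> 1" by simp
  have "real (k * l) \<le> L" "L < real (k * (l + 1))"
    using floor(1,2) assms(1) by (simp_all add: field_simps)
  then show "2 ^ (k * l) \<le> real m / (100 * eps0)" "real m / (100 * eps0) < 2 ^ (k * (l + 1))"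
    unfolding Q by (simp_all flip: powr_realpow)
qed

lemma sample_bound_le:
  fixes eps0 :: real
  assumes "k \<ge> 2" "0 < eps0" "l \<ge> 1"
    and lower: "2 ^ (k * l) \<le> real m / (100 * eps0)"
    and upper: "real m / (100 * eps0) < 2 ^ (k * (l + 1))"
  shows "1 / (25 * 2 ^ k) * (real (m * k * l) / (100 * eps0 * log 2 (real (m * k * l) / (100 * eps0))))
      powr ((real k - 2) / real k) \<le> 2 ^ (l * (k - 2)) / 100"
proof -
  define Q where "Q = real m / (100 * eps0)"
  define N where "N = real (m * k * l) / (100 * eps0)"
  define e where "e = (real k - 2) / real k"
  have "1 \<le> k * l" using assms(1,3) by (simp add: Suc_le_eq)
  then have kl: "1 \<le> real (k * l)" by (metis of_nat_1 of_nat_le_iff)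
  have N: "N = real (k * l) * Q" by (simp add: N_def Q_def)
  have Q_pos: "0 < Q" using lower unfolding Q_def by (smt (verit) zero_less_power)
  have "2 ^ (k * l) \<le> N"
    using lower mult_right_mono[OF kl, of Q] Q_pos unfolding N Q_def by simp
  then have "2 powr real (k * l) \<le> N" by (subst powr_realpow) simp_all
  then have log_N: "real (k * l) \<le> log 2 N"
    using Q_pos kl by (subst le_log_iff) (auto simp: N)
  have log_pos: "0 < log 2 N" using log_N kl by linarith
  then have "N / log 2 N \<le> N / real (k * l)"
    using log_N kl Q_pos by (intro divide_left_mono mult_pos_pos) (auto simp: N)
  also have "\<dots> = Q" using assms(1,3) by (simp add: N)
  finally have "N / log 2 N \<le> 2 ^ (k * (l + 1))" using upper unfolding Q_def by simp
  moreover have "0 \<le> N / log 2 N"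
    using log_pos kl Q_pos by (intro divide_nonneg_pos) (simp_all add: N)
  ultimately have "(N / log 2 N) powr e \<le> (2 ^ (k * (l + 1))) powr e"
    using assms(1) by (intro powr_mono2) (simp_all add: e_def)
  also have "\<dots> = 2 powr (real (k * (l + 1)) * e)"
    by (simp add: powr_powr flip: powr_realpow)
  also have "real (k * (l + 1)) * e = real (l * (k - 2) + (k - 2))"
    using assms(1) by (simp add: e_def field_simps of_nat_diff)
  also have "(2::real) powr \<dots> = 2 ^ (l * (k - 2)) * 2 ^ (k - 2)"
    by (simp add: power_add powr_add flip: powr_realpow)
  finally have "(N / log 2 N) powr e \<le> 2 ^ (l * (k - 2)) * 2 ^ (k - 2)" .
  moreover have "(2::real) ^ k = 4 * 2 ^ (k - 2)"
  proof -
    have "(2::real) ^ k = 2 ^ (2 + (k - 2))" by (simp only: le_add_diff_inverse[OF assms(1)])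
    then show ?thesis by (simp add: power_add)
  qed
  ultimately show ?thesis
    by (simp add: N_def e_def divide_divide_eq_left field_simps)
qed

lemma sample_lower_bound:
  fixes k m T :: nat and eps0 :: real
  defines "l \<equiv> nat \<lfloor>(1 / real k) * log 2 (real m / (100 * eps0))\<rfloor>"
  assumes "k \<ge> 2" "0 < eps0" "eps0 < 1 / 2" "100 * 2 ^ k \<le> m"
    and "1 / 3 \<le> success_prob k l m eps0 T A"
  shows "1 / (25 * 2 ^ k) * (real (m * k * l) / (100 * eps0 * log 2 (real (m * k * l) / (100 * eps0))))
      powr ((real k - 2) / real k) \<le> real T"
proof -
  have m: "100 * 2 ^ k \<le> real m" using of_nat_mono[OF assms(5)] by simp
  have "25 \<le> m" using assms(5) one_le_power[of "2::nat" k] by linarith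
  have "eps0 < 1" using assms(4) by simp
  note level = floor_log_level_bounds[OF assms(2,3) \<open>eps0 < 1\<close> m, folded l_def]
  have "2 ^ (l * (k - 2)) / 100 \<le> real T"
    using success_prob_lt_one_third[OF assms(2) level(1) assms(3,4) \<open>25 \<le> m\<close> level(2)] assms(6)
    by (metis leD not_le)
  then show ?thesis using sample_bound_le[OF assms(2,3) level] by linarith
qed

theorem lemma5p8:
  fixes k :: nat and eps0 :: real
  assumes "k \<ge> 2" and "0 < eps0" and "eps0 < 1 / (200 * 2 ^ k)"
  shows "\<exists>m0::nat. \<forall>m \<ge> m0.
           let l = nat \<lfloor>(1 / real k) * log 2 (real m / (100 * eps0))\<rfloor>;
               n = m * k * l
           in \<forall>(T::nat) (A :: assignment list \<Rightarrow> nat pmf).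
                success_prob k l m eps0 T A \<ge> 1 / 3 \<longrightarrow>
                real T \<ge> 1 / (25 * 2 ^ k) *
                  (real n / (100 * eps0 * log 2 (real n / (100 * eps0))))
                    powr ((real k - 2) / real k)"
proof -
  have "(1::real) / (200 * 2 ^ k) \<le> 1 / 200" by (simp add: field_simps)
  then have "eps0 < 1 / 2" using assms(3) by linarith
  then show ?thesis
    unfolding Let_def
    by (intro exI[of _ "100 * 2 ^ k"] allI impI sample_lower_bound[OF assms(1,2)])
qed

end
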